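(* Let $n\ge 2$ be an integer, let $A$ be a complex Banach algebra, and let $p\in(0,1)$, $\theta\in[0,\infty)$ be real numbers. Suppose $f:A\to A$ satisfies $$\Big\|\mu f\Big(\frac{x+y}{2}\Big)+\mu f\Big(\frac{x-y}{2}\Big)-f(\mu x)+f(a^n)-\big(f(a)a^{n-1}+af(a)a^{n-2}+\cdots+a^{n-2}f(a)a+a^{n-1}f(a)\big)\Big\|\le \theta(\|x\|^p+\|y\|^p+\|a\|^p)$$ for all $\mu\in\mathbb{T}$ and all $x,y,a\in A$. Then there exists a unique $n$-Jordan derivation $D:A\to A$ such that $$\|f(x)-D(x)\|\le \frac{2^p\theta}{2-2^p}\|x\|^p$$ for all $x\in A$.
   Context: $\mathbb{T}=\{\mu\in\mathbb{C}:|\mu|=1\}$. For an integer $n\ge 2$, an $n$-Jordan derivation on an algebra $A$ is a linear map $D:A\to A$ such that $D(a^n)=D(a)a^{n-1}+aD(a)a^{n-2}+\cdots+a^{n-2}D(a)a+a^{n-1}D(a)$ for all $a\in A$. *)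

theory Defs
  imports Complex_Main
begin

text \<open>A complex Banach algebra is modelled as a real Banach algebra (type class
  real_normed_algebra + banach; no unit assumed) together with a complex scalar
  multiplication sc that extends the real one and is compatible with norm and product.\<close>

definition complex_scaling :: "(complex \<Rightarrow> 'a::{real_normed_algebra,banach} \<Rightarrow> 'a) \<Rightarrow> bool" where
  "complex_scaling sc \<longleftrightarrow>
     (\<forall>c d x. sc c (sc d x) = sc (c * d) x) \<and>
     (\<forall>c x y. sc c (x + y) = sc c x + sc c y) \<and>
     (\<forall>c d x. sc (c + d) x = sc c x + sc d x) \<and>
     (\<forall>r x. sc (complex_of_real r) x = scaleR r x) \<and>
     (\<forall>c x. norm (sc c x) = cmod c * norm x) \<and>
     (\<forall>c x y. sc c (x * y) = sc c x * y) \<and>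
     (\<forall>c x y. sc c (x * y) = x * sc c y)"

text \<open>lpow a k x = a^k x and rpow a k x = x a^k (with a^0 x = x), so no unit is needed.\<close>
fun lpow :: "'a::times \<Rightarrow> nat \<Rightarrow> 'a \<Rightarrow> 'a" where
  "lpow a 0 x = x"
| "lpow a (Suc k) x = a * lpow a k x"

fun rpow :: "'a::times \<Rightarrow> nat \<Rightarrow> 'a \<Rightarrow> 'a" where
  "rpow a 0 x = x"
| "rpow a (Suc k) x = rpow a k x * a"

text \<open>a^n for n >= 1\<close>
definition apow :: "'a::times \<Rightarrow> nat \<Rightarrow> 'a" where
  "apow a n = lpow a (n - 1) a"

definition jsum :: "('a::{times,comm_monoid_add} \<Rightarrow> 'a) \<Rightarrow> nat \<Rightarrow> 'a \<Rightarrow> 'a" where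
  "jsum D n a = (\<Sum>k<n. lpow a k (rpow a (n - 1 - k) (D a)))"

definition n_jordan_derivation ::
  "(complex \<Rightarrow> 'a::{real_normed_algebra,banach} \<Rightarrow> 'a) \<Rightarrow> nat \<Rightarrow> ('a \<Rightarrow> 'a) \<Rightarrow> bool" where
  "n_jordan_derivation sc n D \<longleftrightarrow>
     (\<forall>x y. D (x + y) = D x + D y) \<and>
     (\<forall>c x. D (sc c x) = sc c (D x)) \<and>
     (\<forall>a. D (apow a n) = jsum D n a)"

end

theory Submission
  imports Defs
begin

text \<open>Taking \<open>a = 0\<close>, \<open>\<mu> = 1\<close>, \<open>x = 2z\<close> and \<open>y = 0\<close> in the hypothesis gives
  \<open>\<parallel>f(2z)/2 - f(z)\<parallel> \<le> \<theta> 2\<^sup>p/2 \<parallel>z\<parallel>\<^sup>p\<close>. As \<open>2\<^sup>p/2 < 1\<close>, Hyers' sequence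
  \<open>2\<^sup>-\<^sup>k f(2\<^sup>k x)\<close> converges geometrically to a map \<open>D\<close> with
  \<open>\<parallel>f x - D x\<parallel> \<le> 2\<^sup>p\<theta>/(2 - 2\<^sup>p) \<parallel>x\<parallel>\<^sup>p\<close>. Rescaling the hypothesis by \<open>2\<^sup>k\<close> shows that
  \<open>D\<close> satisfies the Jensen equation \<open>\<mu>D((x+y)/2) + \<mu>D((x-y)/2) = D(\<mu>x)\<close> exactly, so \<open>D\<close> is
  additive and commutes with unimodular scalars, hence with all complex scalars, since every
  complex number of modulus at most 2 is a sum of two unimodular ones. The \<open>n\<close>-Jordan defect of
  \<open>f\<close> at \<open>2\<^sup>k a\<close> is divided by \<open>2\<^sup>k\<^sup>n \<ge> 2\<^sup>k\<close> when passing to the rescaled map, so \<open>D\<close> is an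
  \<open>n\<close>-Jordan derivation. Finally, two real-homogeneous maps within \<open>O(\<parallel>x\<parallel>\<^sup>p)\<close> of \<open>f\<close>
  coincide because \<open>p < 1\<close>.\<close>

lemma
  assumes "complex_scaling sc"
  shows complex_scaling_mult: "sc c (sc d x) = sc (c * d) x"
    and complex_scaling_add: "sc c (x + y) = sc c x + sc c y"
    and complex_scaling_add_left: "sc (c + d) x = sc c x + sc d x"
    and complex_scaling_of_real: "sc (complex_of_real r) x = r *\<^sub>R x"
    and complex_scaling_norm: "norm (sc c x) = cmod c * norm x"
  using assms unfolding complex_scaling_def by blast+

lemma complex_scaling_one: "complex_scaling sc \<Longrightarrow> sc 1 x = x"
  using complex_scaling_of_real[of sc 1] by simp

lemma complex_scaling_scaleR:
  assumes "complex_scaling sc"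
  shows "sc c (r *\<^sub>R x) = r *\<^sub>R sc c x"
proof -
  have "sc c (r *\<^sub>R x) = sc (c * complex_of_real r) x"
    using assms by (simp add: complex_scaling_mult flip: complex_scaling_of_real)
  also have "\<dots> = sc (complex_of_real r) (sc c x)"
    using assms by (simp add: complex_scaling_mult mult.commute)
  finally show ?thesis
    using assms by (simp add: complex_scaling_of_real)
qed

lemma complex_scaling_zero: "complex_scaling sc \<Longrightarrow> sc c 0 = 0"
  using complex_scaling_scaleR[of sc c 0 0] by simp

lemma complex_scaling_bounded_linear:
  assumes "complex_scaling sc"
  shows "bounded_linear (sc c)"
  by (rule bounded_linear_intro[where K = "cmod c"])
    (use assms in \<open>simp_all add: complex_scaling_add complex_scaling_scaleR
      complex_scaling_norm mult.commute\<close>)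

lemma sum_of_two_unimodular:
  fixes c :: complex
  assumes "cmod c \<le> 2"
  obtains u v where "cmod u = 1" "cmod v = 1" "c = u + v"
proof (cases "c = 0")
  case True
  then show ?thesis using that[of 1 "-1"] by simp
next
  case False
  define t where "t = arccos (cmod c / 2)"
  have "cos t = cmod c / 2"
    unfolding t_def using assms norm_ge_zero[of c] by (intro cos_arccos) linarith+
  then have "cis t + cis (- t) = complex_of_real (cmod c)"
    by (simp add: complex_eq_iff)
  then have "sgn c * cis t + sgn c * cis (- t) = c"
    using False by (subst distrib_left[symmetric]) (simp add: sgn_eq)
  then show ?thesis
    using that[of "sgn c * cis t" "sgn c * cis (- t)"] False by (simp add: norm_mult norm_sgn)
qed

lemma additive_complex_homogeneous:
  assumes sc: "complex_scaling sc" and "additive D"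
    and unimodular: "\<And>\<mu> x. cmod \<mu> = 1 \<Longrightarrow> D (sc \<mu> x) = sc \<mu> (D x)"
  shows "D (sc c x) = sc c (D x)"
proof -
  interpret additive D by fact
  have of_nat: "D (real m *\<^sub>R y) = real m *\<^sub>R D y" for m y
    by (induction m) (simp_all add: zero add algebra_simps)
  have small: "D (sc d y) = sc d (D y)" if d: "cmod d \<le> 2" for d y
  proof -
    obtain u v where "cmod u = 1" "cmod v = 1" "d = u + v"
      using sum_of_two_unimodular[OF d] .
    then show ?thesis
      using sc by (simp add: complex_scaling_add_left add unimodular)
  qed
  define M where "M = nat \<lceil>cmod c\<rceil> + 1"
  have M: "0 < real M" "cmod c \<le> real M"
    unfolding M_def by linarith+
  define d where "d = c / of_nat M"
  have "cmod d \<le> 1"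
    using M by (simp add: d_def norm_divide)
  moreover have "sc c y = real M *\<^sub>R sc d y" for y
    using sc M by (simp add: d_def complex_scaling_mult flip: complex_scaling_of_real)
  ultimately show ?thesis
    by (simp add: of_nat small)
qed

lemma jensen_imp_additive:
  fixes D :: "'a::real_vector \<Rightarrow> 'b::ab_group_add"
  assumes "\<And>x y. D ((1/2) *\<^sub>R (x + y)) + D ((1/2) *\<^sub>R (x - y)) = D x"
  shows "additive D"
proof
  fix u v :: 'a
  have "(1/2::real) *\<^sub>R ((u + v) + (u - v)) = u" "(1/2::real) *\<^sub>R ((u + v) - (u - v)) = v"
    by (simp_all add: algebra_simps flip: scaleR_2)
  then show "D (u + v) = D u + D v"
    using assms[of "u + v" "u - v"] by simp
qed

lemma lpow_scaleR: "lpow a j (r *\<^sub>R z) = r *\<^sub>R lpow a j (z::'a::real_algebra)"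
  by (induction j) auto

lemma rpow_scaleR: "rpow a j (r *\<^sub>R z) = r *\<^sub>R rpow a j (z::'a::real_algebra)"
  by (induction j) auto

lemma lpow_scaleR_base: "lpow (r *\<^sub>R a) j z = r ^ j *\<^sub>R lpow a j (z::'a::real_algebra)"
  by (induction j) auto

lemma rpow_scaleR_base: "rpow (r *\<^sub>R a) j z = r ^ j *\<^sub>R rpow a j (z::'a::real_algebra)"
  by (induction j) (auto simp: mult.commute)

lemma lpow_zero: "lpow a j 0 = (0::'a::mult_zero)"
  by (induction j) auto

lemma apow_zero: "apow (0::'a::mult_zero) n = 0"
  by (simp add: apow_def lpow_zero)

lemma apow_scaleR:
  assumes "n \<ge> 1"
  shows "apow (t *\<^sub>R a) n = t ^ n *\<^sub>R apow (a::'a::real_algebra) n"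
proof -
  have "t * t ^ (n - 1) = t ^ n"
    using assms by (simp flip: power_Suc)
  then show ?thesis
    by (simp add: apow_def lpow_scaleR_base lpow_scaleR)
qed

lemma jsum_zero:
  assumes "n \<ge> 2"
  shows "jsum h n (0::'a::semiring_0) = 0"
  unfolding jsum_def
proof (intro sum.neutral ballI)
  fix k assume "k \<in> {..<n}"
  show "lpow 0 k (rpow 0 (n - 1 - k) (h 0)) = 0"
  proof (cases k)
    case 0
    with assms have "n - 1 - k = Suc (n - 2)" by simp
    then show ?thesis using 0 by simp
  qed simp
qed

lemma jsum_scaleR:
  assumes "n \<ge> 1" and "h (t *\<^sub>R a) = t *\<^sub>R g a"
  shows "jsum h n (t *\<^sub>R a) = t ^ n *\<^sub>R jsum g n (a::'a::real_algebra)"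
  unfolding jsum_def scaleR_sum_right
proof (intro sum.cong refl)
  fix k assume "k \<in> {..<n}"
  then have "t * t ^ (n - Suc k) * t ^ k = t ^ n"
    using assms(1) by (simp flip: power_add power_Suc)
  then show "lpow (t *\<^sub>R a) k (rpow (t *\<^sub>R a) (n - 1 - k) (h (t *\<^sub>R a)))
      = t ^ n *\<^sub>R lpow a k (rpow a (n - 1 - k) (g a))"
    by (simp add: assms(2) lpow_scaleR_base lpow_scaleR rpow_scaleR_base rpow_scaleR)
qed

lemma tendsto_lpow:
  "(X \<longlongrightarrow> L) F \<Longrightarrow> ((\<lambda>k. lpow a j (X k)) \<longlongrightarrow> lpow a j (L::'a::real_normed_algebra)) F"
  by (induction j) (auto intro: tendsto_mult)

lemma tendsto_rpow:
  "(X \<longlongrightarrow> L) F \<Longrightarrow> ((\<lambda>k. rpow a j (X k)) \<longlongrightarrow> rpow a j (L::'a::real_normed_algebra)) F"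
  by (induction j) (auto intro: tendsto_mult)

lemma tendsto_jsum:
  "((\<lambda>k. g k a) \<longlongrightarrow> D a) F \<Longrightarrow>
    ((\<lambda>k. jsum (g k) n a) \<longlongrightarrow> jsum D n (a::'a::real_normed_algebra)) F"
  unfolding jsum_def by (intro tendsto_sum tendsto_lpow tendsto_rpow)

lemma LIMSEQ_geometric_bound_imp_zero:
  fixes X :: "nat \<Rightarrow> 'a::real_normed_vector"
  assumes "X \<longlonglongrightarrow> L" and "\<And>k. norm (X k) \<le> B * r ^ k" and "0 \<le> r" "r < 1"
  shows "L = 0"
proof -
  have "(\<lambda>k. B * r ^ k) \<longlonglongrightarrow> 0"
    using assms(3,4) by (intro tendsto_mult_right_zero LIMSEQ_power_zero) simp
  moreover have "\<forall>\<^sub>F k in sequentially. norm (X k) \<le> norm (B * r ^ k) * 1"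
    using assms(2) by (intro always_eventually allI) (simp add: order_trans[OF _ abs_ge_self])
  ultimately have "X \<longlonglongrightarrow> 0"
    by (rule tendsto_0_le)
  with assms(1) show ?thesis
    using LIMSEQ_unique by blast
qed

lemma two_powr_less_two: "p < 1 \<Longrightarrow> 2 powr p < (2::real)"
  using powr_less_mono[of p 1 2] by simp

lemma norm_scaleR_power_powr:
  "norm ((2::real) ^ k *\<^sub>R x) powr p = (2 powr p) ^ k * norm x powr p"
  by (induction k) (simp_all add: powr_mult ac_simps)

lemma homogeneous_approximations_eq:
  fixes f D E :: "'a::real_normed_vector \<Rightarrow> 'b::real_normed_vector"
  assumes D: "\<And>r x. D (r *\<^sub>R x) = r *\<^sub>R D x" and E: "\<And>r x. E (r *\<^sub>R x) = r *\<^sub>R E x"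
    and fD: "\<And>x. norm (f x - D x) \<le> K * norm x powr p"
    and fE: "\<And>x. norm (f x - E x) \<le> K * norm x powr p"
    and "p < 1"
  shows "D = E"
proof
  fix x
  have "norm (D x - E x) \<le> 2 * K * norm x powr p * (2 powr p / 2) ^ k" for k
  proof -
    define t :: real where "t = 2 ^ k"
    have "norm (D (t *\<^sub>R x) - E (t *\<^sub>R x)) \<le> 2 * K * norm (t *\<^sub>R x) powr p"
      using norm_triangle_ineq4[of "f (t *\<^sub>R x) - E (t *\<^sub>R x)" "f (t *\<^sub>R x) - D (t *\<^sub>R x)"]
        fD[of "t *\<^sub>R x"] fE[of "t *\<^sub>R x"]
      by simp
    moreover have "D x - E x = (1 / t) *\<^sub>R (D (t *\<^sub>R x) - E (t *\<^sub>R x))"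
      by (simp add: t_def D E scaleR_diff_right)
    ultimately have "norm (D x - E x) \<le> (1 / t) * (2 * K * norm (t *\<^sub>R x) powr p)"
      by (simp add: t_def divide_right_mono)
    also have "\<dots> = 2 * K * norm x powr p * (2 powr p / 2) ^ k"
      unfolding t_def norm_scaleR_power_powr by (simp add: power_divide)
    finally show ?thesis .
  qed
  then have "D x - E x = 0"
    using two_powr_less_two[OF \<open>p < 1\<close>]
    by (intro LIMSEQ_geometric_bound_imp_zero[OF tendsto_const,
          where B = "2 * K * norm x powr p" and r = "2 powr p / 2"]) simp_all
  then show "D x = E x"
    by simp
qed

definition dyadic_rescaling :: "('a::real_vector \<Rightarrow> 'b::real_vector) \<Rightarrow> nat \<Rightarrow> 'a \<Rightarrow> 'b" where
  "dyadic_rescaling f k x = (1 / 2 ^ k) *\<^sub>R f (2 ^ k *\<^sub>R x)"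

definition hyers_limit :: "('a::real_vector \<Rightarrow> 'b::real_normed_vector) \<Rightarrow> 'a \<Rightarrow> 'b" where
  "hyers_limit f x = lim (\<lambda>k. dyadic_rescaling f k x)"

lemma dyadic_rescaling_0 [simp]: "dyadic_rescaling f 0 x = f x"
  by (simp add: dyadic_rescaling_def)

locale approx_doubling =
  fixes f :: "'a::real_normed_vector \<Rightarrow> 'b::banach" and \<delta> p :: real
  assumes doubling: "\<And>y. norm ((1/2) *\<^sub>R f (2 *\<^sub>R y) - f y) \<le> \<delta> * norm y powr p"
    and exponent_less_one: "p < 1"
begin

lemma ratio_less_one: "2 powr p / 2 < 1"
  using two_powr_less_two[OF exponent_less_one] by simp

lemma norm_dyadic_rescaling_diff:
  "norm (dyadic_rescaling f (Suc j) x - dyadic_rescaling f j x)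
    \<le> \<delta> * norm x powr p * (2 powr p / 2) ^ j"
proof -
  define y where "y = (2::real) ^ j *\<^sub>R x"
  have "dyadic_rescaling f (Suc j) x - dyadic_rescaling f j x
      = (1 / 2 ^ j) *\<^sub>R ((1/2) *\<^sub>R f (2 *\<^sub>R y) - f y)"
    by (simp add: dyadic_rescaling_def y_def scaleR_diff_right)
  then have "norm (dyadic_rescaling f (Suc j) x - dyadic_rescaling f j x)
      = (1 / 2 ^ j) * norm ((1/2) *\<^sub>R f (2 *\<^sub>R y) - f y)"
    by simp
  also have "\<dots> \<le> (1 / 2 ^ j) * (\<delta> * norm y powr p)"
    by (intro mult_left_mono doubling) simp
  also have "\<dots> = \<delta> * norm x powr p * (2 powr p / 2) ^ j"
    unfolding y_def norm_scaleR_power_powr by (simp add: power_divide)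
  finally show ?thesis .
qed

lemma summable_norm_dyadic_rescaling_diff:
  "summable (\<lambda>j. norm (dyadic_rescaling f (Suc j) x - dyadic_rescaling f j x))"
  by (rule summable_comparison_test'[where g = "\<lambda>j. \<delta> * norm x powr p * (2 powr p / 2) ^ j"])
    (use ratio_less_one norm_dyadic_rescaling_diff in \<open>simp_all add: summable_geometric\<close>)

lemma hyers_limit_eq_suminf:
  "hyers_limit f x = f x + (\<Sum>j. dyadic_rescaling f (Suc j) x - dyadic_rescaling f j x)"
  and LIMSEQ_dyadic_rescaling: "(\<lambda>k. dyadic_rescaling f k x) \<longlonglongrightarrow> hyers_limit f x"
proof -
  have telescope: "(\<lambda>k. dyadic_rescaling f k x)
      = (\<lambda>k. f x + (\<Sum>j<k. dyadic_rescaling f (Suc j) x - dyadic_rescaling f j x))"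
    by (simp add: sum_lessThan_telescope[of "\<lambda>j. dyadic_rescaling f j x"])
  have "(\<lambda>k. dyadic_rescaling f k x)
      \<longlonglongrightarrow> f x + (\<Sum>j. dyadic_rescaling f (Suc j) x - dyadic_rescaling f j x)"
    unfolding telescope
    by (rule tendsto_add[OF tendsto_const summable_LIMSEQ[OF summable_norm_cancel]])
      (rule summable_norm_dyadic_rescaling_diff)
  moreover from this show "hyers_limit f x
      = f x + (\<Sum>j. dyadic_rescaling f (Suc j) x - dyadic_rescaling f j x)"
    unfolding hyers_limit_def by (rule limI)
  ultimately show "(\<lambda>k. dyadic_rescaling f k x) \<longlonglongrightarrow> hyers_limit f x"
    by simp
qed

lemma norm_diff_hyers_limit:
  "norm (f x - hyers_limit f x) \<le> 2 * \<delta> / (2 - 2 powr p) * norm x powr p"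
proof -
  let ?B = "\<lambda>j. \<delta> * norm x powr p * (2 powr p / 2) ^ j"
  have "norm (f x - hyers_limit f x)
      = norm (\<Sum>j. dyadic_rescaling f (Suc j) x - dyadic_rescaling f j x)"
    by (simp add: hyers_limit_eq_suminf)
  also have "\<dots> \<le> (\<Sum>j. norm (dyadic_rescaling f (Suc j) x - dyadic_rescaling f j x))"
    by (rule summable_norm[OF summable_norm_dyadic_rescaling_diff])
  also have "\<dots> \<le> (\<Sum>j. ?B j)"
    using ratio_less_one
    by (intro suminf_le norm_dyadic_rescaling_diff summable_norm_dyadic_rescaling_diff
        summable_mult summable_geometric) simp
  also have "\<dots> = \<delta> * norm x powr p / (1 - 2 powr p / 2)"
    using ratio_less_one by (simp add: suminf_mult suminf_geometric summable_geometric)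
  also have "\<dots> = 2 * \<delta> / (2 - 2 powr p) * norm x powr p"
    using two_powr_less_two[OF exponent_less_one] by (simp add: field_simps)
  finally show ?thesis .
qed

end

lemma n_jordan_derivation_scaleR:
  assumes "complex_scaling sc" and "n_jordan_derivation sc n D"
  shows "D (r *\<^sub>R x) = r *\<^sub>R D x"
proof -
  have "D (sc (complex_of_real r) x) = sc (complex_of_real r) (D x)"
    using assms(2) unfolding n_jordan_derivation_def by blast
  then show ?thesis
    using assms(1) by (simp add: complex_scaling_of_real)
qed

locale approx_n_jordan_derivation =
  fixes sc :: "complex \<Rightarrow> 'a::{real_normed_algebra,banach} \<Rightarrow> 'a"
    and f :: "'a \<Rightarrow> 'a" and n :: nat and p \<theta> :: real
  assumes complex_scaling: "complex_scaling sc"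
    and n_ge_2: "n \<ge> 2"
    and exponent_less_one: "p < 1"
    and defect: "\<And>\<mu> x y a. cmod \<mu> = 1 \<Longrightarrow>
       norm (sc \<mu> (f (scaleR (1/2) (x + y))) + sc \<mu> (f (scaleR (1/2) (x - y))) - f (sc \<mu> x)
             + f (apow a n) - jsum f n a)
       \<le> \<theta> * (norm x powr p + norm y powr p + norm a powr p)"
begin

lemma f_zero: "f 0 = 0"
proof -
  have "norm (f 0 + f 0) \<le> 0"
    using defect[of 1 0 0 0] complex_scaling n_ge_2
    by (simp add: complex_scaling_one apow_zero jsum_zero)
  then have "2 *\<^sub>R f 0 = 0"
    by (simp add: scaleR_2)
  then show ?thesis
    by simp
qed

lemma jensen_defect:
  "cmod \<mu> = 1 \<Longrightarrow>
    norm (sc \<mu> (f ((1/2) *\<^sub>R (x + y))) + sc \<mu> (f ((1/2) *\<^sub>R (x - y))) - f (sc \<mu> x))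
      \<le> \<theta> * (norm x powr p + norm y powr p)"
  using defect[of \<mu> x y 0] n_ge_2 by (simp add: apow_zero jsum_zero f_zero)

lemma jordan_defect: "norm (f (apow a n) - jsum f n a) \<le> \<theta> * norm a powr p"
  using defect[of 1 0 0 a] complex_scaling
  by (simp add: complex_scaling_one complex_scaling_zero f_zero)

lemma doubling_defect:
  "norm ((1/2) *\<^sub>R f (2 *\<^sub>R y) - f y) \<le> \<theta> * 2 powr p / 2 * norm y powr p"
proof -
  have "norm (f y + f y - f (2 *\<^sub>R y)) \<le> \<theta> * (2 powr p * norm y powr p)"
    using jensen_defect[of 1 "2 *\<^sub>R y" 0] complex_scaling
    by (simp add: complex_scaling_one powr_mult)
  moreover have "(1/2) *\<^sub>R f (2 *\<^sub>R y) - f y = - ((1/2) *\<^sub>R (f y + f y - f (2 *\<^sub>R y)))"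
    by (simp add: algebra_simps flip: scaleR_2)
  ultimately show ?thesis
    by simp
qed

sublocale hyers: approx_doubling f "\<theta> * 2 powr p / 2" p
  by unfold_locales (fact doubling_defect exponent_less_one)+

lemma norm_diff_hyers_limit:
  "norm (f x - hyers_limit f x) \<le> (2 powr p * \<theta>) / (2 - 2 powr p) * norm x powr p"
  using hyers.norm_diff_hyers_limit[of x] by (simp add: mult.commute)

lemma jensen_defect_dyadic_rescaling:
  assumes "cmod \<mu> = 1"
  shows "norm (sc \<mu> (dyadic_rescaling f k ((1/2) *\<^sub>R (x + y)))
      + sc \<mu> (dyadic_rescaling f k ((1/2) *\<^sub>R (x - y))) - dyadic_rescaling f k (sc \<mu> x))
    \<le> \<theta> * (norm x powr p + norm y powr p) * (2 powr p / 2) ^ k"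
proof -
  define t :: real where "t = 2 ^ k"
  define X Y where "X = t *\<^sub>R x" and "Y = t *\<^sub>R y"
  have "sc \<mu> (dyadic_rescaling f k ((1/2) *\<^sub>R (x + y)))
      + sc \<mu> (dyadic_rescaling f k ((1/2) *\<^sub>R (x - y))) - dyadic_rescaling f k (sc \<mu> x)
    = (1 / t) *\<^sub>R (sc \<mu> (f ((1/2) *\<^sub>R (X + Y))) + sc \<mu> (f ((1/2) *\<^sub>R (X - Y))) - f (sc \<mu> X))"
    using complex_scaling
    by (simp add: dyadic_rescaling_def t_def X_def Y_def complex_scaling_scaleR
        scaleR_add_right scaleR_diff_right mult.commute)
  then have "norm (sc \<mu> (dyadic_rescaling f k ((1/2) *\<^sub>R (x + y)))
      + sc \<mu> (dyadic_rescaling f k ((1/2) *\<^sub>R (x - y))) - dyadic_rescaling f k (sc \<mu> x))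
    \<le> (1 / t) * (\<theta> * (norm X powr p + norm Y powr p))"
    using jensen_defect[OF assms, of X Y] by (simp add: t_def divide_right_mono)
  also have "\<dots> = \<theta> * (norm x powr p + norm y powr p) * (2 powr p / 2) ^ k"
    unfolding X_def Y_def t_def norm_scaleR_power_powr
    by (simp add: power_divide algebra_simps add_divide_distrib)
  finally show ?thesis .
qed

lemma hyers_limit_jensen:
  assumes "cmod \<mu> = 1"
  shows "sc \<mu> (hyers_limit f ((1/2) *\<^sub>R (x + y))) + sc \<mu> (hyers_limit f ((1/2) *\<^sub>R (x - y)))
    = hyers_limit f (sc \<mu> x)"
proof -
  have "(\<lambda>k. sc \<mu> (dyadic_rescaling f k ((1/2) *\<^sub>R (x + y)))
      + sc \<mu> (dyadic_rescaling f k ((1/2) *\<^sub>R (x - y))) - dyadic_rescaling f k (sc \<mu> x))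
    \<longlonglongrightarrow> sc \<mu> (hyers_limit f ((1/2) *\<^sub>R (x + y))) + sc \<mu> (hyers_limit f ((1/2) *\<^sub>R (x - y)))
      - hyers_limit f (sc \<mu> x)"
    by (intro tendsto_diff tendsto_add hyers.LIMSEQ_dyadic_rescaling
        bounded_linear.tendsto[OF complex_scaling_bounded_linear[OF complex_scaling]])
  from LIMSEQ_geometric_bound_imp_zero[OF this jensen_defect_dyadic_rescaling[OF assms]]
  show ?thesis
    using hyers.ratio_less_one by simp
qed

lemma additive_hyers_limit: "additive (hyers_limit f)"
  by (rule jensen_imp_additive)
    (use hyers_limit_jensen[of 1] complex_scaling in \<open>simp add: complex_scaling_one\<close>)

lemma hyers_limit_complex_homogeneous: "hyers_limit f (sc c x) = sc c (hyers_limit f x)"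
proof (rule additive_complex_homogeneous[OF complex_scaling additive_hyers_limit])
  fix \<mu> x assume "cmod \<mu> = 1"
  from hyers_limit_jensen[OF this, of x x]
  show "hyers_limit f (sc \<mu> x) = sc \<mu> (hyers_limit f x)"
    using complex_scaling
    by (simp add: additive.zero[OF additive_hyers_limit] complex_scaling_zero flip: scaleR_2)
qed

lemma jordan_defect_dyadic_rescaling:
  "norm (dyadic_rescaling f (k * n) (apow a n) - jsum (dyadic_rescaling f k) n a)
    \<le> \<theta> * norm a powr p * (2 powr p / 2) ^ k"
proof -
  define t :: real where "t = 2 ^ k"
  define e where "e = dyadic_rescaling f (k * n) (apow a n) - jsum (dyadic_rescaling f k) n a"
  have n: "n \<ge> 1" and t: "t \<ge> 1"
    using n_ge_2 by (simp_all add: t_def)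
  have "f (apow (t *\<^sub>R a) n) - jsum f n (t *\<^sub>R a) = t ^ n *\<^sub>R e"
    using jsum_scaleR[OF n, of f t a "dyadic_rescaling f k"]
    by (simp add: e_def apow_scaleR[OF n] dyadic_rescaling_def t_def power_mult scaleR_diff_right)
  then have "t ^ n * norm e \<le> \<theta> * norm (t *\<^sub>R a) powr p"
    using jordan_defect[of "t *\<^sub>R a"] t by simp
  moreover have "t * norm e \<le> t ^ n * norm e"
    using power_increasing[OF n t] by (simp add: mult_right_mono)
  ultimately have "norm e \<le> \<theta> * norm (t *\<^sub>R a) powr p / t"
    using t by (simp add: field_simps)
  also have "\<dots> = \<theta> * norm a powr p * (2 powr p / 2) ^ k"
    unfolding t_def norm_scaleR_power_powr by (simp add: power_divide)
  finally show ?thesis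
    unfolding e_def .
qed

lemma hyers_limit_jordan: "hyers_limit f (apow a n) = jsum (hyers_limit f) n a"
proof -
  have "strict_mono (\<lambda>k. k * n)"
    using n_ge_2 by (intro strict_monoI) simp
  then have "(\<lambda>k. dyadic_rescaling f (k * n) (apow a n)) \<longlonglongrightarrow> hyers_limit f (apow a n)"
    using LIMSEQ_subseq_LIMSEQ[OF hyers.LIMSEQ_dyadic_rescaling] by (simp add: o_def)
  moreover have "(\<lambda>k. jsum (dyadic_rescaling f k) n a) \<longlonglongrightarrow> jsum (hyers_limit f) n a"
    by (rule tendsto_jsum) (rule hyers.LIMSEQ_dyadic_rescaling)
  ultimately have "(\<lambda>k. dyadic_rescaling f (k * n) (apow a n) - jsum (dyadic_rescaling f k) n a)
      \<longlonglongrightarrow> hyers_limit f (apow a n) - jsum (hyers_limit f) n a"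
    by (rule tendsto_diff)
  from LIMSEQ_geometric_bound_imp_zero[OF this jordan_defect_dyadic_rescaling]
  show ?thesis
    using hyers.ratio_less_one by simp
qed

lemma n_jordan_derivation_hyers_limit: "n_jordan_derivation sc n (hyers_limit f)"
  unfolding n_jordan_derivation_def
  using additive.add[OF additive_hyers_limit] hyers_limit_complex_homogeneous hyers_limit_jordan
  by blast

end

theorem corollary2p3:
  fixes sc :: "complex \<Rightarrow> 'a::{real_normed_algebra,banach} \<Rightarrow> 'a"
    and f :: "'a \<Rightarrow> 'a" and n :: nat and p \<theta> :: real
  assumes "complex_scaling sc"
    and "n \<ge> 2"
    and "0 < p" and "p < 1" and "0 \<le> \<theta>"
    and "\<And>\<mu> x y a. cmod \<mu> = 1 \<Longrightarrow>
       norm (sc \<mu> (f (scaleR (1/2) (x + y))) + sc \<mu> (f (scaleR (1/2) (x - y))) - f (sc \<mu> x)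
             + f (apow a n) - jsum f n a)
       \<le> \<theta> * (norm x powr p + norm y powr p + norm a powr p)"
  shows "\<exists>!D. n_jordan_derivation sc n D \<and>
           (\<forall>x. norm (f x - D x) \<le> (2 powr p * \<theta>) / (2 - 2 powr p) * norm x powr p)"
proof -
  interpret approx_n_jordan_derivation sc f n p \<theta>
    using assms(1,2,4,6) by unfold_locales
  show ?thesis
  proof (rule ex1I[of _ "hyers_limit f"])
    show "n_jordan_derivation sc n (hyers_limit f) \<and>
        (\<forall>x. norm (f x - hyers_limit f x) \<le> (2 powr p * \<theta>) / (2 - 2 powr p) * norm x powr p)"
      using n_jordan_derivation_hyers_limit norm_diff_hyers_limit by blast
  next
    fix D
    assume D: "n_jordan_derivation sc n D \<and>
        (\<forall>x. norm (f x - D x) \<le> (2 powr p * \<theta>) / (2 - 2 powr p) * norm x powr p)"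
    show "D = hyers_limit f"
      by (rule homogeneous_approximations_eq[where f = f and p = p
            and K = "(2 powr p * \<theta>) / (2 - 2 powr p)"])
        (use D n_jordan_derivation_scaleR[OF complex_scaling] n_jordan_derivation_hyers_limit
           norm_diff_hyers_limit exponent_less_one in blast)+
  qed
qed

end
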